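(* If there exists an $h\times h$ real Hadamard matrix with $h\equiv 1$ or $2\pmod 3$, then there exists an equiangular tight frame of $N$ vectors in $\mathbb{R}^M$ with \[ M=\tfrac{1}{3}(h+1)(2h+1),\qquad N=h(2h+1). \]
   Context: A real Hadamard matrix of size $h$ is an $h\times h$ matrix $\mathbf{H}$ with entries in $\{\pm1\}$ such that $\mathbf{H}\mathbf{H}^{T}=h\mathbf{I}$. An equiangular tight frame (ETF) of $N$ vectors in $\mathbb{R}^M$ is a sequence $\{\phi_i\}_{i=1}^N$ of nonzero vectors of equal norm such that $|\langle\phi_i,\phi_j\rangle|$ is the same for all $i\neq j$ and $\sum_i\phi_i\phi_i^{T}$ is a scalar multiple of the identity on $\mathbb{R}^M$. *)

theory Defs
  imports Main "HOL-Analysis.Analysis"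
begin

definition is_hadamard :: "nat \<Rightarrow> (nat \<Rightarrow> nat \<Rightarrow> real) \<Rightarrow> bool" where
  "is_hadamard h H \<longleftrightarrow>
     (\<forall>i<h. \<forall>j<h. H i j = 1 \<or> H i j = -1) \<and>
     (\<forall>i<h. \<forall>j<h. (\<Sum>k<h. H i k * H j k) = (if i = j then real h else 0))"

definition inner_M :: "nat \<Rightarrow> (nat \<Rightarrow> real) \<Rightarrow> (nat \<Rightarrow> real) \<Rightarrow> real" where
  "inner_M M x y = (\<Sum>a<M. x a * y a)"

definition is_ETF :: "nat \<Rightarrow> nat \<Rightarrow> (nat \<Rightarrow> nat \<Rightarrow> real) \<Rightarrow> bool" where
  "is_ETF M N phi \<longleftrightarrow>
     (\<forall>i<N. \<exists>a<M. phi i a \<noteq> 0) \<and>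
     (\<forall>i<N. \<forall>j<N. inner_M M (phi i) (phi i) = inner_M M (phi j) (phi j)) \<and>
     (\<forall>i<N. \<forall>j<N. \<forall>k<N. \<forall>l<N. i \<noteq> j \<longrightarrow> k \<noteq> l \<longrightarrow>
        \<bar>inner_M M (phi i) (phi j)\<bar> = \<bar>inner_M M (phi k) (phi l)\<bar>) \<and>
     (\<exists>c::real. \<forall>a<M. \<forall>b<M. (\<Sum>i<N. phi i a * phi i b) = (if a = b then c else 0))"

end

(*
  Let v = 2h - 1 and take a Steiner triple system on v points, so that every point lies on
  h - 1 blocks and there are b = v(v - 1)/6 blocks. Spreading the rows of a Hadamard matrix A of
  order h (first column normalised to 1 and then dropped) over the blocks through each point gives
  the vh vectors of a Steiner ETF in R^b. We add one coordinate per point and one extra coordinate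
  and 2h further vectors built from the rows of a Hadamard matrix B of order 2h (Sylvester's
  doubling of the given one, last column normalised to 1). Then every vector has squared norm
  2h + 2, distinct vectors have inner product +-2, and the frame operator is 6h times the identity:
  an ETF of N = h(2h + 1) vectors in dimension M = b + v + 1 = (h + 1)(2h + 1)/3.

  The Steiner system exists for h = 1, 2; otherwise 4 divides h, and h not divisible by 3 makes
  v = 3 (mod 6), covered by Bose's construction, or v = 7 (mod 12), i.e. v = 2w + 1 with
  w = 3 (mod 6), covered by doubling Bose's system on w points along a one-factorization of the
  complete graph on w + 1 points.
*)

theory Submission
  imports Defs "Jordan_Normal_Form.Determinant" "HOL-Number_Theory.Cong" "HOL-Library.Countable"
begin

section \<open>Hadamard matrices\<close>

lemma hadamard_entry:
  assumes "is_hadamard h H" "i < h" "j < h"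
  shows "H i j = 1 \<or> H i j = -1"
  using assms unfolding is_hadamard_def by blast

lemma hadamard_abs_entry:
  assumes "is_hadamard h H" "i < h" "j < h"
  shows "\<bar>H i j\<bar> = 1"
  using hadamard_entry[OF assms] by auto

lemma hadamard_entry_square:
  assumes "is_hadamard h H" "i < h" "j < h"
  shows "H i j * H i j = 1"
  using hadamard_entry[OF assms] by auto

lemma hadamard_rows:
  assumes "is_hadamard h H" "i < h" "j < h"
  shows "(\<Sum>k<h. H i k * H j k) = (if i = j then real h else 0)"
  using assms unfolding is_hadamard_def by blast

text \<open>A square matrix with a right inverse has it as a left inverse, so \<open>H\<^sup>T H = h I\<close> as well.\<close>

lemma hadamard_columns:
  assumes "is_hadamard h H" "i < h" "j < h"
  shows "(\<Sum>k<h. H k i * H k j) = (if i = j then real h else 0)"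
proof -
  have h_pos: "h > 0" using assms by auto
  define A where "A = mat h h (\<lambda>(i, j). H i j)"
  define B where "B = mat h h (\<lambda>(i, j). H j i / real h)"
  have A: "A \<in> carrier_mat h h" and B: "B \<in> carrier_mat h h"
    unfolding A_def B_def by auto
  have "A * B = 1\<^sub>m h"
  proof (rule eq_matI)
    fix i j assume ij: "i < dim_row (1\<^sub>m h)" "j < dim_col (1\<^sub>m h)"
    have "(A * B) $$ (i, j) = (\<Sum>k<h. H i k * H j k) / real h"
      using ij by (simp add: A_def B_def scalar_prod_def lessThan_atLeast0 sum_divide_distrib)
    then show "(A * B) $$ (i, j) = 1\<^sub>m h $$ (i, j)"
      using hadamard_rows[OF assms(1)] ij h_pos by auto
  qed (auto simp: A_def B_def)
  then have "B * A = 1\<^sub>m h"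
    using mat_mult_left_right_inverse[OF A B] by blast
  have "(\<Sum>k<h. H k i * H k j) / real h = (B * A) $$ (i, j)"
    using assms by (simp add: A_def B_def scalar_prod_def lessThan_atLeast0 sum_divide_distrib)
  also have "\<dots> = (if i = j then 1 else 0)"
    using \<open>B * A = 1\<^sub>m h\<close> assms by simp
  finally show ?thesis
    using h_pos by (cases "i = j") (simp_all add: field_simps)
qed

lemma hadamard_scale_rows:
  assumes H: "is_hadamard h H" and s: "\<forall>i<h. s i = 1 \<or> s i = -1"
  shows "is_hadamard h (\<lambda>i j. s i * H i j)"
  unfolding is_hadamard_def
proof (intro conjI allI impI)
  fix i j assume ij: "i < h" "j < h"
  then show "s i * H i j = 1 \<or> s i * H i j = -1"
    using hadamard_entry[OF H ij] s by auto
next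
  fix i j assume ij: "i < h" "j < h"
  have "(\<Sum>k<h. s i * H i k * (s j * H j k)) = (\<Sum>k<h. (s i * s j) * (H i k * H j k))"
    by (rule sum.cong) (simp_all add: mult_ac)
  also have "\<dots> = s i * s j * (\<Sum>k<h. H i k * H j k)"
    by (rule sum_distrib_left[symmetric])
  also have "\<dots> = (if i = j then real h else 0)"
  proof -
    have "s i * s i = 1" using s ij by auto
    then show ?thesis using hadamard_rows[OF H ij] by (cases "i = j") simp_all
  qed
  finally show "(\<Sum>k<h. s i * H i k * (s j * H j k)) = (if i = j then real h else 0)" .
qed

lemma hadamard_normalize_column:
  assumes H: "is_hadamard h H" and c: "c < h"
  obtains H' where "is_hadamard h H'" "\<forall>i<h. H' i c = 1"
proof
  show "is_hadamard h (\<lambda>i j. H i c * H i j)"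
    using hadamard_entry[OF H _ c] by (intro hadamard_scale_rows[OF H]) simp
  show "\<forall>i<h. H i c * H i c = 1"
    using hadamard_entry_square[OF H _ c] by simp
qed

definition sylvester_double :: "nat \<Rightarrow> (nat \<Rightarrow> nat \<Rightarrow> real) \<Rightarrow> nat \<Rightarrow> nat \<Rightarrow> real" where
  "sylvester_double h H i j = (if h \<le> i \<and> h \<le> j then -1 else 1) * H (i mod h) (j mod h)"

lemma sum_lessThan_double:
  fixes f :: "nat \<Rightarrow> 'b::comm_monoid_add"
  shows "(\<Sum>k<2*h. f k) = (\<Sum>k<h. f k) + (\<Sum>k<h. f (k + h))"
proof -
  have "(\<Sum>k<2*h. f k) = sum f {0..<h} + sum f {h..<h+h}"
    by (simp add: mult_2 lessThan_atLeast0 sum.atLeastLessThan_concat)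
  also have "sum f {h..<h+h} = (\<Sum>k<h. f (k + h))"
    using sum.shift_bounds_nat_ivl[of f 0 h h] by (simp add: lessThan_atLeast0)
  finally show ?thesis by (simp add: lessThan_atLeast0)
qed

lemma hadamard_sylvester_double:
  assumes H: "is_hadamard h H"
  shows "is_hadamard (2*h) (sylvester_double h H)"
  unfolding is_hadamard_def
proof (intro conjI allI impI)
  fix i j assume "i < 2*h" "j < 2*h"
  then have "i mod h < h" "j mod h < h" by auto
  from hadamard_entry[OF H this]
  show "sylvester_double h H i j = 1 \<or> sylvester_double h H i j = -1"
    by (auto simp: sylvester_double_def)
next
  fix i j assume ij: "i < 2*h" "j < 2*h"
  define sgn where "sgn x = (if h \<le> x then -1 else 1 :: real)" for x
  define r where "r = (\<Sum>k<h. H (i mod h) k * H (j mod h) k)"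
  have low: "(\<Sum>k<h. sylvester_double h H i k * sylvester_double h H j k) = r"
    unfolding r_def by (intro sum.cong) (auto simp: sylvester_double_def)
  have "(\<Sum>k<h. sylvester_double h H i (k + h) * sylvester_double h H j (k + h))
      = (\<Sum>k<h. (sgn i * sgn j) * (H (i mod h) k * H (j mod h) k))"
    by (intro sum.cong) (auto simp: sylvester_double_def sgn_def)
  then have high: "(\<Sum>k<h. sylvester_double h H i (k + h) * sylvester_double h H j (k + h))
      = sgn i * sgn j * r"
    unfolding r_def by (simp add: sum_distrib_left)
  have "(\<Sum>k<2*h. sylvester_double h H i k * sylvester_double h H j k) = (1 + sgn i * sgn j) * r"
    unfolding sum_lessThan_double low high by (simp add: algebra_simps)
  also have "\<dots> = (1 + sgn i * sgn j) * (if i mod h = j mod h then real h else 0)"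
  proof -
    have "i mod h < h" "j mod h < h" using ij by auto
    from hadamard_rows[OF H this] show ?thesis unfolding r_def by simp
  qed
  also have "\<dots> = (if i = j then real (2*h) else 0)"
  proof (cases "h \<le> i \<longleftrightarrow> h \<le> j")
    case True
    have "x mod h = (if x < h then x else x - h)" if "x < 2*h" for x
      using that by (simp add: mod_if)
    with ij True have "i mod h = j mod h \<longleftrightarrow> i = j" by auto
    with True show ?thesis by (auto simp: sgn_def)
  next
    case False
    then show ?thesis by (auto simp: sgn_def)
  qed
  finally show "(\<Sum>k<2*h. sylvester_double h H i k * sylvester_double h H j k)
      = (if i = j then real (2*h) else 0)" .
qed

text \<open>Summing \<open>(H\<^sub>0\<^sub>k + H\<^sub>1\<^sub>k)(H\<^sub>0\<^sub>k + H\<^sub>2\<^sub>k)\<close>, which is \<open>4\<close> or \<open>0\<close>, over all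
  columns gives \<open>h\<close> by orthogonality of the first three rows.\<close>

lemma hadamard_order_dvd_4:
  assumes H: "is_hadamard h H" and h: "3 \<le> h"
  shows "4 dvd h"
proof -
  define agree where "agree k \<longleftrightarrow> H 1 k = H 0 k \<and> H 2 k = H 0 k" for k
  define t where "t k = (H 0 k + H 1 k) * (H 0 k + H 2 k)" for k
  have "(\<Sum>k<h. t k) = (\<Sum>k<h. H 0 k * H 0 k) + (\<Sum>k<h. H 0 k * H 2 k)
      + (\<Sum>k<h. H 1 k * H 0 k) + (\<Sum>k<h. H 1 k * H 2 k)"
    unfolding t_def by (simp add: algebra_simps sum.distrib)
  also have "\<dots> = real h"
    using hadamard_rows[OF H] h by simp
  finally have "real h = (\<Sum>k<h. t k)" ..
  also have "\<dots> = (\<Sum>k<h. if agree k then 4 else 0)"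
  proof (rule sum.cong[OF refl])
    fix k assume "k \<in> {..<h}"
    then show "t k = (if agree k then 4 else 0)"
      using hadamard_entry[OF H, of 0 k] hadamard_entry[OF H, of 1 k] hadamard_entry[OF H, of 2 k] h
      unfolding t_def agree_def by auto
  qed
  also have "\<dots> = 4 * real (card {k \<in> {..<h}. agree k})"
    by (simp add: sum.If_cases Int_def)
  finally have "h = 4 * card {k \<in> {..<h}. agree k}"
    by linarith
  then show ?thesis by (metis dvd_triv_left)
qed

section \<open>Steiner triple systems\<close>

locale steiner_triple_system =
  fixes V :: "'a set" and Bl :: "'a set set"
  assumes finite_points: "finite V"
    and block_subset: "\<beta> \<in> Bl \<Longrightarrow> \<beta> \<subseteq> V"
    and card_block: "\<beta> \<in> Bl \<Longrightarrow> card \<beta> = 3"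
    and pair_in_unique_block: "p \<in> V \<Longrightarrow> q \<in> V \<Longrightarrow> p \<noteq> q \<Longrightarrow> \<exists>!\<beta>. \<beta> \<in> Bl \<and> p \<in> \<beta> \<and> q \<in> \<beta>"
begin

lemma finite_blocks: "finite Bl"
proof (rule finite_subset)
  show "Bl \<subseteq> Pow V" using block_subset by blast
qed (simp add: finite_points)

lemma finite_block: "\<beta> \<in> Bl \<Longrightarrow> finite \<beta>"
  using finite_points block_subset finite_subset by blast

lemma block_unique:
  assumes "\<beta> \<in> Bl" "\<beta>' \<in> Bl" "p \<noteq> q" "p \<in> \<beta>" "q \<in> \<beta>" "p \<in> \<beta>'" "q \<in> \<beta>'"
  shows "\<beta> = \<beta>'"
  using assms block_subset pair_in_unique_block by blast

text \<open>The sets \<open>\<beta> - {p}\<close> with \<open>p \<in> \<beta>\<close> partition \<open>V - {p}\<close> into pairs.\<close>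

lemma card_blocks_through:
  assumes p: "p \<in> V"
  shows "2 * card {\<beta> \<in> Bl. p \<in> \<beta>} = card V - 1"
proof -
  let ?R = "{\<beta> \<in> Bl. p \<in> \<beta>}"
  have partition: "V - {p} = (\<Union>\<beta>\<in>?R. \<beta> - {p})"
  proof
    show "V - {p} \<subseteq> (\<Union>\<beta>\<in>?R. \<beta> - {p})"
    proof
      fix q assume q: "q \<in> V - {p}"
      then obtain \<beta> where "\<beta> \<in> Bl" "p \<in> \<beta>" "q \<in> \<beta>"
        using pair_in_unique_block[OF p, of q] by auto
      with q show "q \<in> (\<Union>\<beta>\<in>?R. \<beta> - {p})" by blast
    qed
    show "(\<Union>\<beta>\<in>?R. \<beta> - {p}) \<subseteq> V - {p}"
      using block_subset by blast
  qed
  have disjoint: "(\<beta> - {p}) \<inter> (\<beta>' - {p}) = {}" if "\<beta> \<in> ?R" "\<beta>' \<in> ?R" "\<beta> \<noteq> \<beta>'" for \<beta> \<beta>'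
  proof (rule ccontr)
    assume "(\<beta> - {p}) \<inter> (\<beta>' - {p}) \<noteq> {}"
    then obtain q where "q \<in> \<beta>" "q \<in> \<beta>'" "p \<noteq> q" by blast
    with that block_unique[of \<beta> \<beta>' p q] show False by simp
  qed
  have "card (V - {p}) = (\<Sum>\<beta>\<in>?R. card (\<beta> - {p}))"
    unfolding partition using finite_blocks finite_block disjoint by (intro card_UN_disjoint) auto
  also have "\<dots> = (\<Sum>\<beta>\<in>?R. 2)"
    by (intro sum.cong) (auto simp: card_block finite_block)
  finally show ?thesis
    using p finite_points by simp
qed

lemma card_blocks: "6 * card Bl = card V * (card V - 1)"
proof -
  have count_points: "card \<beta> = (\<Sum>p\<in>V. if p \<in> \<beta> then 1 else 0)" if "\<beta> \<in> Bl" for \<beta>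
  proof -
    have "(\<Sum>p\<in>V. if p \<in> \<beta> then 1 else 0) = card {p \<in> V. p \<in> \<beta>}"
      using finite_points by (simp flip: sum.inter_filter)
    also have "{p \<in> V. p \<in> \<beta>} = \<beta>"
      using block_subset[OF that] by blast
    finally show ?thesis ..
  qed
  have count_blocks: "(\<Sum>\<beta>\<in>Bl. if p \<in> \<beta> then 1 else 0) = card {\<beta> \<in> Bl. p \<in> \<beta>}" for p
    using finite_blocks by (simp flip: sum.inter_filter)
  have "3 * card Bl = (\<Sum>\<beta>\<in>Bl. card \<beta>)"
    using card_block by simp
  also have "\<dots> = (\<Sum>\<beta>\<in>Bl. \<Sum>p\<in>V. if p \<in> \<beta> then 1 else 0)"
    using count_points by (rule sum.cong[OF refl])
  also have "\<dots> = (\<Sum>p\<in>V. \<Sum>\<beta>\<in>Bl. if p \<in> \<beta> then 1 else 0)"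
    by (rule sum.swap)
  also have "\<dots> = (\<Sum>p\<in>V. card {\<beta> \<in> Bl. p \<in> \<beta>})"
    by (simp only: count_blocks)
  finally have "6 * card Bl = 2 * (\<Sum>p\<in>V. card {\<beta> \<in> Bl. p \<in> \<beta>})"
    by simp
  also have "\<dots> = (\<Sum>p\<in>V. 2 * card {\<beta> \<in> Bl. p \<in> \<beta>})"
    by (rule sum_distrib_left)
  also have "\<dots> = (\<Sum>p\<in>V. card V - 1)"
    using card_blocks_through by (rule sum.cong[OF refl])
  finally show ?thesis by simp
qed

end

lemma steiner_triple_system_image:
  assumes "steiner_triple_system V Bl" "inj_on f V"
  shows "steiner_triple_system (f ` V) ((`) f ` Bl)"
proof -
  interpret steiner_triple_system V Bl by fact
  have inj_block: "inj_on f \<beta>" if "\<beta> \<in> Bl" for \<beta>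
    using inj_on_subset[OF assms(2) block_subset[OF that]] .
  show ?thesis
  proof (rule steiner_triple_system.intro)
    show "finite (f ` V)" using finite_points by simp
  next
    fix \<gamma> assume "\<gamma> \<in> (`) f ` Bl"
    then obtain \<beta> where \<beta>: "\<beta> \<in> Bl" "\<gamma> = f ` \<beta>" by blast
    show "\<gamma> \<subseteq> f ` V"
      using \<beta> block_subset by blast
    show "card \<gamma> = 3"
      using \<beta> card_block card_image[OF inj_block] by simp
  next
    fix p' q' assume "p' \<in> f ` V" "q' \<in> f ` V" "p' \<noteq> q'"
    then obtain p q where pq: "p \<in> V" "q \<in> V" "p \<noteq> q" "p' = f p" "q' = f q"
      by blast
    obtain \<beta> where \<beta>: "\<beta> \<in> Bl" "p \<in> \<beta>" "q \<in> \<beta>"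
      using pair_in_unique_block[OF pq(1-3)] by blast
    show "\<exists>!\<gamma>. \<gamma> \<in> (`) f ` Bl \<and> p' \<in> \<gamma> \<and> q' \<in> \<gamma>"
    proof (rule ex1I[of _ "f ` \<beta>"])
      show "f ` \<beta> \<in> (`) f ` Bl \<and> p' \<in> f ` \<beta> \<and> q' \<in> f ` \<beta>"
        using \<beta> pq(4,5) by simp
    next
      fix \<gamma> assume \<gamma>: "\<gamma> \<in> (`) f ` Bl \<and> p' \<in> \<gamma> \<and> q' \<in> \<gamma>"
      then obtain \<beta>' where \<beta>': "\<beta>' \<in> Bl" "\<gamma> = f ` \<beta>'" by blast
      have "f p \<in> f ` \<beta>'" "f q \<in> f ` \<beta>'"
        using \<gamma> \<beta>'(2) pq(4,5) by simp_all
      then have "p \<in> \<beta>'" "q \<in> \<beta>'"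
        using inj_on_image_mem_iff[OF assms(2) _ block_subset[OF \<beta>'(1)]] pq(1,2) by simp_all
      then have "\<beta>' = \<beta>"
        using block_unique[OF \<beta>'(1) \<beta>(1) pq(3)] \<beta>(2,3) by blast
      then show "\<gamma> = f ` \<beta>"
        using \<beta>'(2) by simp
    qed
  qed
qed

section \<open>Bose's construction\<close>

lemma cong_double_cancel_less:
  fixes m z z' :: nat
  assumes "odd m" "z < m" "z' < m" "[2 * z = 2 * z'] (mod m)"
  shows "z = z'"
proof -
  have "coprime 2 m" using assms(1) by simp
  then have "[z = z'] (mod m)" using assms(4) cong_mult_lcancel_nat by blast
  then show ?thesis using assms(2,3) cong_less_modulus_unique_nat by blast
qed

lemma ex_cong_half:
  fixes m a :: nat
  assumes "odd m"
  shows "\<exists>z<m. [2 * z = a] (mod m)"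
proof -
  obtain n where n: "m = 2 * n + 1" using assms oddE by blast
  let ?z = "a * (n + 1) mod m"
  have "2 * ?z mod m = 2 * (a * (n + 1)) mod m"
    by (simp add: mod_mult_right_eq)
  also have "2 * (a * (n + 1)) = a + a * m"
    using n by (simp add: algebra_simps)
  finally have "[2 * ?z = a] (mod m)"
    by (simp add: cong_def)
  moreover have "?z < m" using n by simp
  ultimately show ?thesis by blast
qed

lemma ex_cong_add:
  fixes m x c :: nat
  assumes "0 < m"
  shows "\<exists>y<m. [x + y = c] (mod m)"
proof -
  let ?y = "(c + (m - x mod m)) mod m"
  have eq: "x + (c + (m - x mod m)) = c + m + m * (x div m)"
    using mult_div_mod_eq[of m x] mod_less_divisor[OF assms, of x] by linarith
  have "(x + ?y) mod m = (x + (c + (m - x mod m))) mod m"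
    by (simp add: mod_add_right_eq)
  also have "\<dots> = (c + m + m * (x div m)) mod m"
    unfolding eq ..
  also have "\<dots> = c mod m"
    by simp
  finally have "(x + ?y) mod m = c mod m" .
  then show ?thesis
    using assms by (intro exI[of _ ?y]) (simp add: cong_def)
qed

text \<open>Over \<open>\<int>/m\<close> with \<open>m\<close> odd, \<open>[2 * z = x + y] (mod m)\<close> defines the idempotent commutative
  quasigroup \<open>z = (x + y)/2\<close>.\<close>

lemma midpoint_unique:
  fixes m x y z z' :: nat
  assumes "odd m" "z < m" "z' < m" "[2 * z = x + y] (mod m)" "[2 * z' = x + y] (mod m)"
  shows "z = z'"
  using cong_double_cancel_less[OF assms(1-3) cong_trans[OF assms(4) cong_sym[OF assms(5)]]] .

lemma midpoint_cancel:
  fixes m x y y' z :: nat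
  assumes "y < m" "y' < m" "[2 * z = x + y] (mod m)" "[2 * z = x + y'] (mod m)"
  shows "y = y'"
proof -
  have "[x + y = x + y'] (mod m)"
    using cong_trans[OF cong_sym[OF assms(3)] assms(4)] .
  then have "[y = y'] (mod m)"
    by (simp only: cong_add_lcancel_nat)
  then show ?thesis
    using assms(1,2) by (rule cong_less_modulus_unique_nat)
qed

lemma midpoint_idem:
  fixes m x z :: nat
  assumes "odd m" "x < m" "z < m" "[2 * z = x + x] (mod m)"
  shows "z = x"
  using midpoint_unique[OF assms(1,3,2) assms(4)] by (simp add: mult_2)

text \<open>The point \<open>(x, i)\<close> is the element \<open>x\<close> of \<open>\<int>/m\<close> on level \<open>i\<close> of three; every level is a
  copy of \<open>\<int>/m\<close>, and a pair on level \<open>i\<close> spans a block with its midpoint on the next level.\<close>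

definition bose_points :: "nat \<Rightarrow> (nat \<times> nat) set" where
  "bose_points m = {..<m} \<times> {..<3}"

definition bose_blocks :: "nat \<Rightarrow> (nat \<times> nat) set set" where
  "bose_blocks m =
     {{(x, 0), (x, 1), (x, 2)} | x. x < m} \<union>
     {{(x, i), (y, i), (z, Suc i mod 3)} | x y z i.
        x < m \<and> y < m \<and> z < m \<and> i < 3 \<and> x \<noteq> y \<and> [2 * z = x + y] (mod m)}"

lemma card_bose_points: "card (bose_points m) = 3 * m"
  by (simp add: bose_points_def card_cartesian_product)

lemma less_3_cases: "i < 3 \<Longrightarrow> i = 0 \<or> i = 1 \<or> i = (2::nat)"
  by auto

lemma next_level_neq: "i < 3 \<Longrightarrow> Suc i mod 3 \<noteq> i"
  using less_3_cases[of i] by auto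

lemma next_next_level_neq: "i < 3 \<Longrightarrow> Suc (Suc i mod 3) mod 3 \<noteq> i"
  using less_3_cases[of i] by (auto simp: mod_Suc)

lemma levels_cases: "i < 3 \<Longrightarrow> j < 3 \<Longrightarrow> i = j \<or> j = Suc i mod 3 \<or> i = Suc j mod 3"
  using less_3_cases[of i] less_3_cases[of j] by auto

lemma bose_blockE:
  assumes "\<beta> \<in> bose_blocks m"
  obtains (vertical) x where "x < m" "\<beta> = {(x, 0), (x, 1), (x, 2)}"
  | (horizontal) x y z i where "x < m" "y < m" "z < m" "i < 3" "x \<noteq> y" "[2 * z = x + y] (mod m)"
      "\<beta> = {(x, i), (y, i), (z, Suc i mod 3)}"
  using assms unfolding bose_blocks_def by blast

lemma bose_vertical_block: "x < m \<Longrightarrow> {(x, 0), (x, 1), (x, 2)} \<in> bose_blocks m"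
  unfolding bose_blocks_def by (rule UnI1) blast

lemma bose_horizontal_block:
  assumes "x < m" "y < m" "z < m" "i < 3" "x \<noteq> y" "[2 * z = x + y] (mod m)"
  shows "{(x, i), (y, i), (z, Suc i mod 3)} \<in> bose_blocks m"
  unfolding bose_blocks_def
  by (rule UnI2, rule CollectI, rule exI[of _ x], rule exI[of _ y], rule exI[of _ z], rule exI[of _ i])
    (use assms in simp)

lemma bose_block_subset_card:
  assumes "\<beta> \<in> bose_blocks m"
  shows "\<beta> \<subseteq> bose_points m \<and> card \<beta> = 3"
  using assms
proof (cases rule: bose_blockE)
  case (vertical x)
  then show ?thesis by (simp add: bose_points_def)
next
  case (horizontal x y z i)
  have "Suc i mod 3 \<noteq> i" using next_level_neq[OF horizontal(4)] .
  then have "card \<beta> = 3" using horizontal(5,7) by simp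
  moreover have "\<beta> \<subseteq> bose_points m" using horizontal(1-4,7) by (simp add: bose_points_def)
  ultimately show ?thesis by simp
qed

lemma bose_block_same_level:
  assumes m: "odd m" and xy: "x < m" "y < m" "x \<noteq> y" "i < 3"
    and z: "z < m" "[2 * z = x + y] (mod m)"
    and \<beta>: "\<beta> \<in> bose_blocks m" "(x, i) \<in> \<beta>" "(y, i) \<in> \<beta>"
  shows "\<beta> = {(x, i), (y, i), (z, Suc i mod 3)}"
  using \<beta>(1)
proof (cases rule: bose_blockE)
  case (vertical a)
  then have "x = a" "y = a" using \<beta>(2,3) by auto
  with xy(3) show ?thesis by simp
next
  case (horizontal a b c l)
  have l: "Suc l mod 3 \<noteq> l" using next_level_neq[OF horizontal(4)] .
  show ?thesis
  proof (cases "i = l")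
    case True
    then have "x \<in> {a, b}" "y \<in> {a, b}" using \<beta>(2,3) horizontal(7) l by auto
    then have ab: "(x = a \<and> y = b) \<or> (x = b \<and> y = a)" using xy(3) by auto
    then have "[2 * c = x + y] (mod m)" using horizontal(6) by (auto simp: add.commute)
    then have "c = z" using midpoint_unique[OF m horizontal(3) z(1) _ z(2)] by blast
    with ab True horizontal(7) show ?thesis by (auto simp: insert_commute)
  next
    case False
    then have "x = c" "y = c" using \<beta>(2,3) horizontal(7) by auto
    with xy(3) show ?thesis by simp
  qed
qed

text \<open>Two points on consecutive levels lie in a vertical block if they have the same coordinate,
  and otherwise in the horizontal block whose midpoint is the upper one.\<close>

lemma bose_block_next_level_same:
  assumes m: "odd m" and x: "x < m" "i < 3"
    and \<beta>: "\<beta> \<in> bose_blocks m" "(x, i) \<in> \<beta>" "(x, Suc i mod 3) \<in> \<beta>"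
  shows "\<beta> = {(x, 0), (x, 1), (x, 2)}"
  using \<beta>(1)
proof (cases rule: bose_blockE)
  case (vertical a)
  then show ?thesis using \<beta>(2) by auto
next
  case (horizontal a b c l)
  have "Suc i mod 3 \<noteq> i" using next_level_neq[OF x(2)] .
  then have "x = c \<and> (x = a \<or> x = b)"
    using \<beta>(2,3) horizontal(7) by auto
  then have "b = a"
  proof (elim conjE disjE)
    assume "x = c" "x = a"
    then have "[2 * c = a + a] (mod m)" by (simp add: mult_2)
    with horizontal(1,2,6) show "b = a" using midpoint_cancel by blast
  next
    assume "x = c" "x = b"
    then have "[2 * c = b + b] (mod m)" by (simp add: mult_2)
    moreover have "[2 * c = b + a] (mod m)" using horizontal(6) by (simp add: add.commute)
    ultimately show "b = a" using horizontal(1,2) midpoint_cancel by metis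
  qed
  with horizontal(5) show ?thesis by simp
qed

lemma bose_block_next_level:
  assumes m: "odd m" and xy: "x < m" "y < m" "x \<noteq> y" "i < 3"
    and w: "w < m" "[2 * y = x + w] (mod m)"
    and \<beta>: "\<beta> \<in> bose_blocks m" "(x, i) \<in> \<beta>" "(y, Suc i mod 3) \<in> \<beta>"
  shows "\<beta> = {(x, i), (w, i), (y, Suc i mod 3)}"
  using \<beta>(1)
proof (cases rule: bose_blockE)
  case (vertical a)
  then have "x = a" "y = a" using \<beta>(2,3) by auto
  with xy(3) show ?thesis by simp
next
  case (horizontal a b c l)
  have "Suc i mod 3 \<noteq> i" "Suc l mod 3 \<noteq> l" "Suc (Suc l mod 3) mod 3 \<noteq> l"
    using next_level_neq next_next_level_neq xy(4) horizontal(4) by blast+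
  then have il: "i = l" "y = c" "x = a \<or> x = b"
    using \<beta>(2,3) horizontal(7) by auto
  show ?thesis
    using il(3)
  proof
    assume "x = a"
    then have "b = w" using midpoint_cancel[OF horizontal(2) w(1)] horizontal(6) w(2) il(2) by simp
    with \<open>x = a\<close> il horizontal(7) show ?thesis by simp
  next
    assume "x = b"
    then have "[2 * y = x + a] (mod m)" using horizontal(6) il(2) by (simp add: add.commute)
    then have "a = w" using midpoint_cancel[OF horizontal(1) w(1)] w(2) by simp
    with \<open>x = b\<close> il horizontal(7) show ?thesis by (simp add: insert_commute)
  qed
qed

lemma bose_pair_same_level:
  assumes m: "odd m" and xy: "x < m" "y < m" "x \<noteq> y" "i < 3"
  shows "\<exists>!\<beta>. \<beta> \<in> bose_blocks m \<and> (x, i) \<in> \<beta> \<and> (y, i) \<in> \<beta>"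
proof -
  obtain z where z: "z < m" "[2 * z = x + y] (mod m)" using ex_cong_half[OF m] by blast
  show ?thesis
  proof (rule ex1I[of _ "{(x, i), (y, i), (z, Suc i mod 3)}"])
    show "{(x, i), (y, i), (z, Suc i mod 3)} \<in> bose_blocks m \<and>
        (x, i) \<in> {(x, i), (y, i), (z, Suc i mod 3)} \<and> (y, i) \<in> {(x, i), (y, i), (z, Suc i mod 3)}"
      using bose_horizontal_block[OF xy(1,2) z(1) xy(4,3) z(2)] by simp
  next
    fix \<beta> assume "\<beta> \<in> bose_blocks m \<and> (x, i) \<in> \<beta> \<and> (y, i) \<in> \<beta>"
    then show "\<beta> = {(x, i), (y, i), (z, Suc i mod 3)}"
      using bose_block_same_level[OF m xy z] by blast
  qed
qed

lemma bose_pair_next_level: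
  assumes m: "odd m" and xy: "x < m" "y < m" "i < 3"
  shows "\<exists>!\<beta>. \<beta> \<in> bose_blocks m \<and> (x, i) \<in> \<beta> \<and> (y, Suc i mod 3) \<in> \<beta>"
proof (cases "x = y")
  case True
  show ?thesis
  proof (rule ex1I[of _ "{(x, 0), (x, 1), (x, 2)}"])
    have "Suc i mod 3 < 3" by simp
    then show "{(x, 0), (x, 1), (x, 2)} \<in> bose_blocks m \<and> (x, i) \<in> {(x, 0), (x, 1), (x, 2)} \<and>
        (y, Suc i mod 3) \<in> {(x, 0), (x, 1), (x, 2)}"
      using bose_vertical_block[OF xy(1)] True less_3_cases xy(3) by blast
  next
    fix \<beta> assume "\<beta> \<in> bose_blocks m \<and> (x, i) \<in> \<beta> \<and> (y, Suc i mod 3) \<in> \<beta>"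
    then show "\<beta> = {(x, 0), (x, 1), (x, 2)}"
      using bose_block_next_level_same[OF m xy(1,3)] True by blast
  qed
next
  case False
  obtain w where w: "w < m" "[x + w = 2 * y] (mod m)" using ex_cong_add[of m x "2 * y"] xy by auto
  have w': "[2 * y = x + w] (mod m)" using w(2) by (rule cong_sym)
  have "w \<noteq> x"
  proof
    assume "w = x"
    then have "y = x" using midpoint_idem[OF m xy(1,2)] w' by simp
    with False show False by simp
  qed
  show ?thesis
  proof (rule ex1I[of _ "{(x, i), (w, i), (y, Suc i mod 3)}"])
    show "{(x, i), (w, i), (y, Suc i mod 3)} \<in> bose_blocks m \<and> (x, i) \<in> {(x, i), (w, i), (y, Suc i mod 3)}
        \<and> (y, Suc i mod 3) \<in> {(x, i), (w, i), (y, Suc i mod 3)}"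
      using bose_horizontal_block[OF xy(1) w(1) xy(2,3)] \<open>w \<noteq> x\<close> w' by simp
  next
    fix \<beta> assume "\<beta> \<in> bose_blocks m \<and> (x, i) \<in> \<beta> \<and> (y, Suc i mod 3) \<in> \<beta>"
    then show "\<beta> = {(x, i), (w, i), (y, Suc i mod 3)}"
      using bose_block_next_level[OF m xy(1,2) False xy(3) w(1) w'] by blast
  qed
qed

theorem steiner_triple_system_bose:
  assumes m: "odd m"
  shows "steiner_triple_system (bose_points m) (bose_blocks m)"
proof (rule steiner_triple_system.intro)
  show "finite (bose_points m)" by (simp add: bose_points_def)
  show "\<beta> \<subseteq> bose_points m" "card \<beta> = 3" if "\<beta> \<in> bose_blocks m" for \<beta>
    using bose_block_subset_card[OF that] by simp_all
next
  fix p q assume pq: "p \<in> bose_points m" "q \<in> bose_points m" "p \<noteq> q"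
  obtain x i y j where p: "p = (x, i)" "x < m" "i < 3" and q: "q = (y, j)" "y < m" "j < 3"
    using pq(1,2) by (auto simp: bose_points_def)
  consider "i = j" | "j = Suc i mod 3" | "i = Suc j mod 3"
    using levels_cases[OF p(3) q(3)] by blast
  then show "\<exists>!\<beta>. \<beta> \<in> bose_blocks m \<and> p \<in> \<beta> \<and> q \<in> \<beta>"
  proof cases
    case 1
    then have "x \<noteq> y" using pq(3) p(1) q(1) by simp
    with 1 show ?thesis using bose_pair_same_level[OF m p(2) q(2) _ p(3)] p(1) q(1) by simp
  next
    case 2
    then show ?thesis using bose_pair_next_level[OF m p(2) q(2) p(3)] p(1) q(1) by simp
  next
    case 3
    then show ?thesis using bose_pair_next_level[OF m q(2) p(2) q(3)] p(1) q(1) by (simp add: conj_ac)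
  qed
qed

section \<open>Doubling a Steiner triple system\<close>

text \<open>\<open>F i a b\<close> says that \<open>{a, b}\<close> is an edge of the \<open>i\<close>-th perfect matching of the complete
  graph on \<open>X\<close>; the matchings, indexed by \<open>I\<close>, partition its edges.\<close>

locale one_factorization =
  fixes X :: "'b set" and I :: "'i set" and F :: "'i \<Rightarrow> 'b \<Rightarrow> 'b \<Rightarrow> bool"
  assumes edge_mem: "F i a b \<Longrightarrow> a \<in> X \<and> b \<in> X \<and> a \<noteq> b"
    and edge_sym: "F i a b \<Longrightarrow> F i b a"
    and matching: "i \<in> I \<Longrightarrow> a \<in> X \<Longrightarrow> \<exists>!b. F i a b"
    and edge_in_unique_factor: "a \<in> X \<Longrightarrow> b \<in> X \<Longrightarrow> a \<noteq> b \<Longrightarrow> \<exists>!i. i \<in> I \<and> F i a b"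

lemma one_factorization_reindex:
  assumes "one_factorization X I F" and \<tau>: "bij_betw \<tau> J I"
  shows "one_factorization X J (\<lambda>j. F (\<tau> j))"
proof -
  interpret one_factorization X I F by fact
  show ?thesis
  proof (rule one_factorization.intro)
    show "F (\<tau> j) a b \<Longrightarrow> a \<in> X \<and> b \<in> X \<and> a \<noteq> b" "F (\<tau> j) a b \<Longrightarrow> F (\<tau> j) b a" for j a b
      using edge_mem edge_sym by simp_all
    show "j \<in> J \<Longrightarrow> a \<in> X \<Longrightarrow> \<exists>!b. F (\<tau> j) a b" for j a
      using matching bij_betwE[OF \<tau>] by simp
  next
    fix a b assume ab: "a \<in> X" "b \<in> X" "a \<noteq> b"
    then obtain i where i: "i \<in> I" "F i a b" and uniq: "\<And>i'. i' \<in> I \<Longrightarrow> F i' a b \<Longrightarrow> i' = i"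
      using edge_in_unique_factor by metis
    obtain j where j: "j \<in> J" "\<tau> j = i"
      using i(1) \<tau> by (metis bij_betw_def imageE)
    show "\<exists>!j. j \<in> J \<and> F (\<tau> j) a b"
    proof (rule ex1I[of _ j])
      show "j \<in> J \<and> F (\<tau> j) a b" using i j by simp
    next
      fix j' assume j': "j' \<in> J \<and> F (\<tau> j') a b"
      then have "\<tau> j' = \<tau> j" using uniq j bij_betwE[OF \<tau>] by metis
      then show "j' = j"
        using \<tau> j(1) j' by (metis bij_betw_def inj_onD)
    qed
  qed
qed

text \<open>The classical factorization of the complete graph on \<open>{..w}\<close>, \<open>w\<close> odd: the \<open>i\<close>-th matching
  joins \<open>i\<close> to \<open>w\<close> and pairs the remaining points of \<open>\<int>/w\<close> symmetrically about \<open>i\<close>.\<close>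

definition cyclic_factor :: "nat \<Rightarrow> nat \<Rightarrow> nat \<Rightarrow> nat \<Rightarrow> bool" where
  "cyclic_factor w i a b \<longleftrightarrow> i < w \<and> a \<noteq> b \<and>
     ((a = w \<and> b = i) \<or> (b = w \<and> a = i) \<or> (a < w \<and> b < w \<and> [2 * i = a + b] (mod w)))"

lemma cyclic_factor_sym: "cyclic_factor w i a b \<Longrightarrow> cyclic_factor w i b a"
  unfolding cyclic_factor_def by (auto simp: add.commute)

lemma cyclic_factor_partner:
  assumes w: "odd w" and i: "i < w" and a: "a \<le> w"
  shows "\<exists>!b. cyclic_factor w i a b"
proof -
  consider "a = w" | "a = i" | "a < w" "a \<noteq> i" using a i by linarith
  then show ?thesis
  proof cases
    case 1
    then show ?thesis using i by (intro ex1I[of _ i]) (auto simp: cyclic_factor_def)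
  next
    case 2
    have "b = w" if "cyclic_factor w i a b" for b
    proof (rule ccontr)
      assume "b \<noteq> w"
      with that 2 have "b < w" "b \<noteq> i" "[2 * i = i + b] (mod w)"
        by (auto simp: cyclic_factor_def)
      moreover have "[2 * i = i + i] (mod w)" by (simp add: mult_2)
      ultimately show False using midpoint_cancel[OF _ i] by blast
    qed
    with 2 i show ?thesis by (intro ex1I[of _ w]) (auto simp: cyclic_factor_def)
  next
    case 3
    obtain b where b: "b < w" "[a + b = 2 * i] (mod w)"
      using ex_cong_add[of w a "2 * i"] i by auto
    have b': "[2 * i = a + b] (mod w)" using b(2) by (rule cong_sym)
    have "b \<noteq> a"
    proof
      assume "b = a"
      with b' have "a = i" using midpoint_idem[OF w 3(1) i] by simp
      with 3(2) show False ..
    qed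
    show ?thesis
    proof (rule ex1I[of _ b])
      show "cyclic_factor w i a b" using 3 b b' \<open>b \<noteq> a\<close> i by (simp add: cyclic_factor_def)
    next
      fix b'' assume "cyclic_factor w i a b''"
      with 3 have "b'' < w" "[2 * i = a + b''] (mod w)" by (auto simp: cyclic_factor_def)
      then show "b'' = b" using midpoint_cancel b(1) b' by blast
    qed
  qed
qed

lemma cyclic_factor_index:
  assumes w: "odd w" and ab: "a \<le> w" "b \<le> w" "a \<noteq> b"
  shows "\<exists>!i. i < w \<and> cyclic_factor w i a b"
proof -
  consider "a = w" | "b = w" | "a < w" "b < w" using ab by linarith
  then show ?thesis
  proof cases
    case 1
    with ab show ?thesis by (intro ex1I[of _ b]) (auto simp: cyclic_factor_def)
  next
    case 2
    with ab show ?thesis by (intro ex1I[of _ a]) (auto simp: cyclic_factor_def)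
  next
    case 3
    obtain i where i: "i < w" "[2 * i = a + b] (mod w)" using ex_cong_half[OF w] by blast
    show ?thesis
    proof (rule ex1I[of _ i])
      show "i < w \<and> cyclic_factor w i a b" using 3 i ab(3) by (simp add: cyclic_factor_def)
    next
      fix i' assume "i' < w \<and> cyclic_factor w i' a b"
      with 3 have "i' < w" "[2 * i' = a + b] (mod w)" by (auto simp: cyclic_factor_def)
      then show "i' = i" using midpoint_unique[OF w _ i(1) _ i(2)] by blast
    qed
  qed
qed

lemma one_factorization_cyclic:
  assumes "odd w"
  shows "one_factorization {..w} {..<w} (cyclic_factor w)"
proof (rule one_factorization.intro)
  show "cyclic_factor w i a b \<Longrightarrow> a \<in> {..w} \<and> b \<in> {..w} \<and> a \<noteq> b" for i a b
    by (auto simp: cyclic_factor_def)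
  show "cyclic_factor w i a b \<Longrightarrow> cyclic_factor w i b a" for i a b
    by (rule cyclic_factor_sym)
  show "i \<in> {..<w} \<Longrightarrow> a \<in> {..w} \<Longrightarrow> \<exists>!b. cyclic_factor w i a b" for i a
    using cyclic_factor_partner[OF assms] by simp
  show "a \<in> {..w} \<Longrightarrow> b \<in> {..w} \<Longrightarrow> a \<noteq> b \<Longrightarrow> \<exists>!i. i \<in> {..<w} \<and> cyclic_factor w i a b" for a b
    using cyclic_factor_index[OF assms] by simp
qed

locale steiner_triple_system_doubling = steiner_triple_system V Bl + one_factorization X V F
  for V :: "'a set" and Bl and X :: "'b set" and F +
  assumes finite_X: "finite X"
begin

definition doubled_points :: "('a + 'b) set" where
  "doubled_points = Inl ` V \<union> Inr ` X"

definition doubled_blocks :: "('a + 'b) set set" where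
  "doubled_blocks = (`) Inl ` Bl \<union> {{Inl p, Inr a, Inr b} | p a b. p \<in> V \<and> F p a b}"

lemma card_doubled_points: "card doubled_points = card V + card X"
proof -
  have "card doubled_points = card (Inl ` V :: ('a + 'b) set) + card (Inr ` X :: ('a + 'b) set)"
    unfolding doubled_points_def using finite_points finite_X by (intro card_Un_disjoint) auto
  also have "\<dots> = card V + card X"
    by (simp add: card_image inj_on_def)
  finally show ?thesis .
qed

lemma doubled_blockE:
  assumes "\<beta> \<in> doubled_blocks"
  obtains (old) \<gamma> where "\<gamma> \<in> Bl" "\<beta> = Inl ` \<gamma>"
  | (new) p a b where "p \<in> V" "F p a b" "\<beta> = {Inl p, Inr a, Inr b}"
  using assms unfolding doubled_blocks_def by blast

lemma new_block: "p \<in> V \<Longrightarrow> F p a b \<Longrightarrow> {Inl p, Inr a, Inr b} \<in> doubled_blocks"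
  unfolding doubled_blocks_def by blast

lemma doubled_pair_old_old:
  assumes pq: "p \<in> V" "q \<in> V" "p \<noteq> q"
  shows "\<exists>!\<beta>. \<beta> \<in> doubled_blocks \<and> Inl p \<in> \<beta> \<and> Inl q \<in> \<beta>"
proof -
  obtain \<gamma> where \<gamma>: "\<gamma> \<in> Bl" "p \<in> \<gamma>" "q \<in> \<gamma>"
    using pair_in_unique_block[OF pq] by blast
  show ?thesis
  proof (rule ex1I[of _ "Inl ` \<gamma>"])
    show "Inl ` \<gamma> \<in> doubled_blocks \<and> Inl p \<in> Inl ` \<gamma> \<and> Inl q \<in> Inl ` \<gamma>"
      using \<gamma> unfolding doubled_blocks_def by blast
  next
    fix \<beta> assume \<beta>: "\<beta> \<in> doubled_blocks \<and> Inl p \<in> \<beta> \<and> Inl q \<in> \<beta>"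
    then have "\<beta> \<in> doubled_blocks" ..
    then show "\<beta> = Inl ` \<gamma>"
    proof (cases rule: doubled_blockE)
      case (old \<delta>)
      then have "p \<in> \<delta>" "q \<in> \<delta>" using \<beta> by auto
      then have "\<delta> = \<gamma>" using block_unique[OF old(1) \<gamma>(1) pq(3)] \<gamma>(2,3) by blast
      with old(2) show ?thesis by simp
    next
      case (new p' a b)
      with \<beta> have "p = p'" "q = p'" by auto
      with pq(3) show ?thesis by simp
    qed
  qed
qed

lemma doubled_pair_old_new:
  assumes pa: "p \<in> V" "a \<in> X"
  shows "\<exists>!\<beta>. \<beta> \<in> doubled_blocks \<and> Inl p \<in> \<beta> \<and> Inr a \<in> \<beta>"
proof -
  obtain b where b: "F p a b" and b_uniq: "\<And>b'. F p a b' \<Longrightarrow> b' = b"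
    using matching[OF pa] by metis
  show ?thesis
  proof (rule ex1I[of _ "{Inl p, Inr a, Inr b}"])
    show "{Inl p, Inr a, Inr b} \<in> doubled_blocks \<and> Inl p \<in> {Inl p, Inr a, Inr b} \<and> Inr a \<in> {Inl p, Inr a, Inr b}"
      using new_block[OF pa(1) b] by simp
  next
    fix \<beta> assume \<beta>: "\<beta> \<in> doubled_blocks \<and> Inl p \<in> \<beta> \<and> Inr a \<in> \<beta>"
    then have "\<beta> \<in> doubled_blocks" ..
    then show "\<beta> = {Inl p, Inr a, Inr b}"
    proof (cases rule: doubled_blockE)
      case (old \<gamma>)
      with \<beta> show ?thesis by auto
    next
      case (new p' a' b')
      with \<beta> have p': "p' = p" and "a = a' \<or> a = b'" by auto
      then show ?thesis
      proof (elim disjE)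
        assume "a = a'"
        then have "b' = b" using b_uniq new(2) p' by simp
        with new(3) p' \<open>a = a'\<close> show ?thesis by simp
      next
        assume "a = b'"
        then have "a' = b" using b_uniq edge_sym[OF new(2)] p' by simp
        with new(3) p' \<open>a = b'\<close> show ?thesis by (simp add: insert_commute)
      qed
    qed
  qed
qed

lemma doubled_pair_new_new:
  assumes ab: "a \<in> X" "b \<in> X" "a \<noteq> b"
  shows "\<exists>!\<beta>. \<beta> \<in> doubled_blocks \<and> Inr a \<in> \<beta> \<and> Inr b \<in> \<beta>"
proof -
  obtain p where p: "p \<in> V" "F p a b" and p_uniq: "\<And>p'. p' \<in> V \<Longrightarrow> F p' a b \<Longrightarrow> p' = p"
    using edge_in_unique_factor[OF ab] by metis
  show ?thesis
  proof (rule ex1I[of _ "{Inl p, Inr a, Inr b}"])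
    show "{Inl p, Inr a, Inr b} \<in> doubled_blocks \<and> Inr a \<in> {Inl p, Inr a, Inr b} \<and> Inr b \<in> {Inl p, Inr a, Inr b}"
      using new_block[OF p] by simp
  next
    fix \<beta> assume \<beta>: "\<beta> \<in> doubled_blocks \<and> Inr a \<in> \<beta> \<and> Inr b \<in> \<beta>"
    then have "\<beta> \<in> doubled_blocks" ..
    then show "\<beta> = {Inl p, Inr a, Inr b}"
    proof (cases rule: doubled_blockE)
      case (old \<gamma>)
      with \<beta> show ?thesis by auto
    next
      case (new p' a' b')
      with \<beta> ab(3) have ab': "(a' = a \<and> b' = b) \<or> (a' = b \<and> b' = a)" by auto
      then have "F p' a b" using new(2) edge_sym by blast
      then have "p' = p" using p_uniq new(1) by blast
      with new(3) ab' show ?thesis by (auto simp: insert_commute)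
    qed
  qed
qed

theorem steiner_triple_system_doubled: "steiner_triple_system doubled_points doubled_blocks"
proof (rule steiner_triple_system.intro)
  show "finite doubled_points"
    unfolding doubled_points_def using finite_points finite_X by simp
next
  fix \<beta> assume "\<beta> \<in> doubled_blocks"
  then have "\<beta> \<subseteq> doubled_points \<and> card \<beta> = 3"
  proof (cases rule: doubled_blockE)
    case (old \<gamma>)
    then show ?thesis
      using block_subset card_block by (auto simp: doubled_points_def card_image)
  next
    case (new p a b)
    then show ?thesis
      using edge_mem[OF new(2)] by (auto simp: doubled_points_def)
  qed
  then show "\<beta> \<subseteq> doubled_points" "card \<beta> = 3" by simp_all
next
  fix u v assume uv: "u \<in> doubled_points" "v \<in> doubled_points" "u \<noteq> v"
  then consider
      (old_old) p q where "p \<in> V" "q \<in> V" "u = Inl p" "v = Inl q"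
    | (old_new) p a where "p \<in> V" "a \<in> X" "u = Inl p" "v = Inr a"
    | (new_old) p a where "p \<in> V" "a \<in> X" "u = Inr a" "v = Inl p"
    | (new_new) a b where "a \<in> X" "b \<in> X" "u = Inr a" "v = Inr b"
    unfolding doubled_points_def by blast
  then show "\<exists>!\<beta>. \<beta> \<in> doubled_blocks \<and> u \<in> \<beta> \<and> v \<in> \<beta>"
  proof cases
    case old_old
    with uv(3) show ?thesis using doubled_pair_old_old by simp
  next
    case old_new
    then show ?thesis using doubled_pair_old_new by simp
  next
    case new_old
    then show ?thesis using doubled_pair_old_new[of p a] by (simp add: conj_ac)
  next
    case new_new
    with uv(3) show ?thesis using doubled_pair_new_new by simp
  qed
qed

end

lemma steiner_triple_system_on_nat:
  fixes V :: "'a::countable set"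
  assumes "steiner_triple_system V Bl"
  shows "\<exists>V' :: nat set. \<exists>Bl'. steiner_triple_system V' Bl' \<and> card V' = card V"
proof -
  have "inj_on to_nat V" by (simp add: inj_on_def)
  then show ?thesis
    using steiner_triple_system_image[OF assms] card_image by blast
qed

lemma steiner_triple_system_exists:
  assumes v: "v = 1 \<or> v mod 6 = 3 \<or> v mod 12 = 7"
  shows "\<exists>V :: nat set. \<exists>Bl. steiner_triple_system V Bl \<and> card V = v"
proof -
  consider "v = 1" | "v mod 6 = 3" | "v mod 12 = 7" using v by blast
  then show ?thesis
  proof cases
    case 1
    have "steiner_triple_system {0 :: nat} {}"
      by (rule steiner_triple_system.intro) auto
    with 1 show ?thesis by fastforce
  next
    case 2
    define m where "m = v div 3"
    have "odd m" "v = 3 * m" using 2 unfolding m_def by presburger+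
    then show ?thesis
      using steiner_triple_system_on_nat[OF steiner_triple_system_bose] card_bose_points by metis
  next
    case 3
    define m where "m = v div 12 * 2 + 1"
    define w where "w = 3 * m"
    have w: "odd w" "v = 2 * w + 1" using 3 unfolding w_def m_def by presburger+
    interpret S: steiner_triple_system "bose_points m" "bose_blocks m"
      using steiner_triple_system_bose[of m] by (simp add: m_def)
    obtain \<tau> where \<tau>: "bij_betw \<tau> (bose_points m) {..<w}"
      using ex_bij_betw_finite_nat[OF S.finite_points] card_bose_points
      by (metis lessThan_atLeast0 w_def)
    interpret D: steiner_triple_system_doubling "bose_points m" "bose_blocks m" "{..w}" "\<lambda>p. cyclic_factor w (\<tau> p)"
      using one_factorization_reindex[OF one_factorization_cyclic[OF w(1)] \<tau>]
      by (intro steiner_triple_system_doubling.intro steiner_triple_system_doubling_axioms.intro) (simp_all add: S.steiner_triple_system_axioms)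
    have "card D.doubled_points = v"
      using D.card_doubled_points card_bose_points w by (simp add: w_def)
    then show ?thesis
      using steiner_triple_system_on_nat[OF D.steiner_triple_system_doubled] by metis
  qed
qed

section \<open>Equiangular tight frames\<close>

lemma is_ETF_of_finite_frame:
  fixes \<psi> :: "'i \<Rightarrow> 'c \<Rightarrow> real"
  assumes fin: "finite I" "finite C"
    and nonzero: "\<And>i. i \<in> I \<Longrightarrow> \<exists>c\<in>C. \<psi> i c \<noteq> 0"
    and norm: "\<And>i. i \<in> I \<Longrightarrow> (\<Sum>c\<in>C. \<psi> i c * \<psi> i c) = d"
    and angle: "\<And>i j. i \<in> I \<Longrightarrow> j \<in> I \<Longrightarrow> i \<noteq> j \<Longrightarrow> \<bar>\<Sum>c\<in>C. \<psi> i c * \<psi> j c\<bar> = \<alpha>"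
    and tight: "\<And>a b. a \<in> C \<Longrightarrow> b \<in> C \<Longrightarrow> (\<Sum>i\<in>I. \<psi> i a * \<psi> i b) = (if a = b then t else 0)"
  shows "\<exists>\<phi>. is_ETF (card C) (card I) \<phi>"
proof -
  obtain g where g: "bij_betw g {..<card I} I"
    using ex_bij_betw_nat_finite[OF fin(1)] by (metis lessThan_atLeast0)
  obtain e where e: "bij_betw e {..<card C} C"
    using ex_bij_betw_nat_finite[OF fin(2)] by (metis lessThan_atLeast0)
  define \<phi> where "\<phi> n k = \<psi> (g n) (e k)" for n k
  have inner: "inner_M (card C) (\<phi> n) (\<phi> n') = (\<Sum>c\<in>C. \<psi> (g n) c * \<psi> (g n') c)" for n n'
    unfolding inner_M_def \<phi>_def using sum.reindex_bij_betw[OF e] by simp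
  have frame: "(\<Sum>n<card I. \<phi> n k * \<phi> n k') = (\<Sum>i\<in>I. \<psi> i (e k) * \<psi> i (e k'))" for k k'
    unfolding \<phi>_def using sum.reindex_bij_betw[OF g] by simp
  have gI: "n < card I \<Longrightarrow> g n \<in> I" for n using g by (auto simp: bij_betw_def)
  have eC: "k < card C \<Longrightarrow> e k \<in> C" for k using e by (auto simp: bij_betw_def)
  have g_inj: "n < card I \<Longrightarrow> n' < card I \<Longrightarrow> g n = g n' \<Longrightarrow> n = n'" for n n'
    using g by (auto simp: bij_betw_def inj_on_def)
  have e_inj: "k < card C \<Longrightarrow> k' < card C \<Longrightarrow> e k = e k' \<Longrightarrow> k = k'" for k k'
    using e by (auto simp: bij_betw_def inj_on_def)
  have "is_ETF (card C) (card I) \<phi>"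
    unfolding is_ETF_def
  proof (intro conjI allI impI)
    fix n assume "n < card I"
    then obtain c where c: "c \<in> C" "\<psi> (g n) c \<noteq> 0" using nonzero gI by blast
    have "c \<in> e ` {..<card C}" using e c(1) by (simp add: bij_betw_def)
    then obtain k where "k < card C" "e k = c" by auto
    with c show "\<exists>k<card C. \<phi> n k \<noteq> 0" by (auto simp: \<phi>_def)
  next
    fix n n' assume "n < card I" "n' < card I"
    then show "inner_M (card C) (\<phi> n) (\<phi> n) = inner_M (card C) (\<phi> n') (\<phi> n')"
      using inner norm gI by simp
  next
    fix n n' l l' assume "n < card I" "n' < card I" "l < card I" "l' < card I" "n \<noteq> n'" "l \<noteq> l'"
    then show "\<bar>inner_M (card C) (\<phi> n) (\<phi> n')\<bar> = \<bar>inner_M (card C) (\<phi> l) (\<phi> l')\<bar>"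
      using inner angle gI g_inj by metis
  next
    show "\<exists>t. \<forall>k<card C. \<forall>k'<card C. (\<Sum>n<card I. \<phi> n k * \<phi> n k') = (if k = k' then t else 0)"
      using frame tight eC e_inj by (intro exI[of _ t]) auto
  qed
  then show ?thesis by blast
qed

lemma sqrt_two_mult_sqrt_two: "sqrt 2 * a * (sqrt 2 * b) = 2 * (a * b :: real)"
proof -
  have "sqrt 2 * a * (sqrt 2 * b) = (sqrt 2 * sqrt 2) * (a * b)" by (simp only: mult_ac)
  then show ?thesis by simp
qed

text \<open>The frame vectors are indexed by the pairs \<open>(p, j)\<close> of a point and a row of \<open>A\<close> and by the rows
  \<open>x\<close> of \<open>B\<close>; the coordinates by the blocks, the points and one extra coordinate \<open>None\<close>.
  The \<open>(p, j)\<close>-vector is the Steiner ETF vector (row \<open>j\<close> of \<open>A\<close> spread over the blocks through \<open>p\<close>,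
  the first column of \<open>A\<close> being dropped) plus \<open>2 e\<^sub>p\<close>; the \<open>x\<close>-vector is row \<open>x\<close> of \<open>B\<close>,
  its last entry rescaled to \<open>\<surd>3\<close> and moved to \<open>None\<close>.\<close>

locale steiner_hadamard_frame = steiner_triple_system V Bl
  for V :: "'a set" and Bl +
  fixes h :: nat and A B :: "nat \<Rightarrow> nat \<Rightarrow> real"
    and \<sigma> :: "'a \<Rightarrow> 'a set \<Rightarrow> nat" and \<tau> :: "'a \<Rightarrow> nat"
  assumes h_pos: "0 < h"
    and card_points: "card V = 2 * h - 1"
    and hadamard_A: "is_hadamard h A"
    and A_first_column: "j < h \<Longrightarrow> A j 0 = 1"
    and hadamard_B: "is_hadamard (2 * h) B"
    and B_last_column: "x < 2 * h \<Longrightarrow> B x (2 * h - 1) = 1"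
    and bij_\<sigma>: "p \<in> V \<Longrightarrow> bij_betw (\<sigma> p) {\<beta> \<in> Bl. p \<in> \<beta>} {1..<h}"
    and bij_\<tau>: "bij_betw \<tau> V {..<2 * h - 1}"
begin

fun frame_vec :: "('a \<times> nat) + nat \<Rightarrow> 'a set + 'a option \<Rightarrow> real" where
  "frame_vec (Inl (p, j)) (Inl \<beta>) = (if p \<in> \<beta> then sqrt 2 * A j (\<sigma> p \<beta>) else 0)"
| "frame_vec (Inl (p, j)) (Inr (Some q)) = (if q = p then 2 else 0)"
| "frame_vec (Inl (p, j)) (Inr None) = 0"
| "frame_vec (Inr x) (Inl \<beta>) = 0"
| "frame_vec (Inr x) (Inr (Some q)) = B x (\<tau> q)"
| "frame_vec (Inr x) (Inr None) = sqrt 3"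

definition frame_index :: "(('a \<times> nat) + nat) set" where
  "frame_index = (V \<times> {..<h}) <+> {..<2 * h}"

definition frame_coords :: "('a set + 'a option) set" where
  "frame_coords = Bl <+> insert None (Some ` V)"

definition gram :: "('a \<times> nat) + nat \<Rightarrow> ('a \<times> nat) + nat \<Rightarrow> real" where
  "gram u w = (\<Sum>c\<in>frame_coords. frame_vec u c * frame_vec w c)"

definition frame_operator :: "'a set + 'a option \<Rightarrow> 'a set + 'a option \<Rightarrow> real" where
  "frame_operator a b = (\<Sum>i\<in>frame_index. frame_vec i a * frame_vec i b)"

lemma finite_frame_index: "finite frame_index"
  by (simp add: frame_index_def finite_points)

lemma finite_frame_coords: "finite frame_coords"
  by (simp add: frame_coords_def finite_points finite_blocks)

lemma card_frame_index: "card frame_index = h * (2 * h + 1)"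
proof -
  have "card frame_index = (2 * h - 1) * h + 2 * h"
    by (simp add: frame_index_def card_Plus card_cartesian_product finite_points card_points)
  then show ?thesis
    using h_pos by (cases h) (simp_all add: algebra_simps)
qed

lemma card_frame_coords: "3 * card frame_coords = (h + 1) * (2 * h + 1)"
proof -
  have "card (insert None (Some ` V)) = card V + 1"
    by (simp add: finite_points card_image)
  then have "card frame_coords = card Bl + 2 * h"
    using h_pos by (simp add: frame_coords_def card_Plus finite_blocks finite_points card_points)
  moreover obtain k where k: "h = Suc k"
    using h_pos by (cases h) auto
  moreover have "6 * card Bl = (2 * k + 1) * (2 * k)"
    using card_blocks card_points k by simp
  then have "3 * card Bl = (2 * k + 1) * k"
    by simp
  ultimately show ?thesis
    by (simp add: algebra_simps)
qed

lemma sum_frame_coords: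
  "(\<Sum>c\<in>frame_coords. f c) = (\<Sum>\<beta>\<in>Bl. f (Inl \<beta>)) + (\<Sum>q\<in>V. f (Inr (Some q))) + f (Inr None)"
  by (simp add: frame_coords_def sum.Plus finite_blocks finite_points sum.reindex add_ac)

lemma sum_frame_index:
  "(\<Sum>i\<in>frame_index. f i) = (\<Sum>p\<in>V. \<Sum>j<h. f (Inl (p, j))) + (\<Sum>x<2 * h. f (Inr x))"
  by (simp add: frame_index_def sum.Plus sum.cartesian_product finite_points)

lemma \<sigma>_mem: "p \<in> V \<Longrightarrow> \<beta> \<in> Bl \<Longrightarrow> p \<in> \<beta> \<Longrightarrow> \<sigma> p \<beta> \<in> {1..<h}"
  using bij_betwE[OF bij_\<sigma>] by blast

lemma \<sigma>_inj: "p \<in> V \<Longrightarrow> \<beta> \<in> Bl \<Longrightarrow> \<gamma> \<in> Bl \<Longrightarrow> p \<in> \<beta> \<Longrightarrow> p \<in> \<gamma> \<Longrightarrow> \<sigma> p \<beta> = \<sigma> p \<gamma> \<Longrightarrow> \<beta> = \<gamma>"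
  using bij_\<sigma> unfolding bij_betw_def inj_on_def by blast

lemma \<tau>_less: "q \<in> V \<Longrightarrow> \<tau> q < 2 * h - 1"
  using bij_betwE[OF bij_\<tau>] by blast

lemma \<tau>_inj: "q \<in> V \<Longrightarrow> r \<in> V \<Longrightarrow> \<tau> q = \<tau> r \<Longrightarrow> q = r"
  using bij_\<tau> unfolding bij_betw_def inj_on_def by blast

lemma sum_blocks_through:
  assumes "p \<in> V"
  shows "(\<Sum>\<beta>\<in>Bl. if p \<in> \<beta> then f (\<sigma> p \<beta>) else 0) = (\<Sum>c\<in>{1..<h}. f c)"
proof -
  have "(\<Sum>\<beta>\<in>Bl. if p \<in> \<beta> then f (\<sigma> p \<beta>) else 0) = (\<Sum>\<beta>\<in>{\<beta> \<in> Bl. p \<in> \<beta>}. f (\<sigma> p \<beta>))"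
    using finite_blocks by (simp add: sum.inter_filter)
  also have "\<dots> = (\<Sum>c\<in>{1..<h}. f c)"
    by (rule sum.reindex_bij_betw[OF bij_\<sigma>[OF assms]])
  finally show ?thesis .
qed

lemma sum_points: "(\<Sum>q\<in>V. f (\<tau> q)) = (\<Sum>c<2 * h - 1. f c)"
  by (rule sum.reindex_bij_betw[OF bij_\<tau>])

lemma A_rows_tail:
  assumes "j < h" "k < h"
  shows "(\<Sum>c\<in>{1..<h}. A j c * A k c) = (if j = k then real h else 0) - 1"
proof -
  have "(\<Sum>c<h. A j c * A k c) = A j 0 * A k 0 + (\<Sum>c\<in>{1..<h}. A j c * A k c)"
    using h_pos by (simp add: lessThan_atLeast0 sum.atLeast_Suc_lessThan)
  then show ?thesis
    using hadamard_rows[OF hadamard_A assms] A_first_column assms by simp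
qed

lemma B_rows_init:
  assumes "x < 2 * h" "y < 2 * h"
  shows "(\<Sum>c<2 * h - 1. B x c * B y c) = (if x = y then real (2 * h) else 0) - 1"
proof -
  have "2 * h = Suc (2 * h - 1)" using h_pos by simp
  then have "(\<Sum>c<2 * h. B x c * B y c) = (\<Sum>c<2 * h - 1. B x c * B y c) + B x (2 * h - 1) * B y (2 * h - 1)"
    by (metis sum.lessThan_Suc)
  then show ?thesis
    using hadamard_rows[OF hadamard_B assms] B_last_column assms by simp
qed

lemma gram_sym: "gram u w = gram w u"
  unfolding gram_def by (simp add: mult.commute)

lemma gram_same_point:
  assumes p: "p \<in> V" and jk: "j < h" "k < h"
  shows "gram (Inl (p, j)) (Inl (p, k)) = (if j = k then 2 * real h + 2 else 2)"
proof -
  have "(\<Sum>\<beta>\<in>Bl. frame_vec (Inl (p, j)) (Inl \<beta>) * frame_vec (Inl (p, k)) (Inl \<beta>))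
      = (\<Sum>\<beta>\<in>Bl. if p \<in> \<beta> then 2 * (A j (\<sigma> p \<beta>) * A k (\<sigma> p \<beta>)) else 0)"
    by (intro sum.cong) (simp_all add: sqrt_two_mult_sqrt_two)
  also have "\<dots> = (\<Sum>c\<in>{1..<h}. 2 * (A j c * A k c))"
    by (rule sum_blocks_through[OF p])
  also have "\<dots> = 2 * (\<Sum>c\<in>{1..<h}. A j c * A k c)"
    by (rule sum_distrib_left[symmetric])
  also have "\<dots> = 2 * ((if j = k then real h else 0) - 1)"
    unfolding A_rows_tail[OF jk] ..
  finally have blocks: "(\<Sum>\<beta>\<in>Bl. frame_vec (Inl (p, j)) (Inl \<beta>) * frame_vec (Inl (p, k)) (Inl \<beta>))
      = 2 * ((if j = k then real h else 0) - 1)" .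
  have points: "(\<Sum>q\<in>V. frame_vec (Inl (p, j)) (Inr (Some q)) * frame_vec (Inl (p, k)) (Inr (Some q))) = 4"
    using finite_points p by (simp add: if_distrib cong: if_cong)
  show ?thesis
    unfolding gram_def sum_frame_coords blocks points by simp
qed

lemma gram_distinct_points:
  assumes pq: "p \<in> V" "q \<in> V" "p \<noteq> q" and jk: "j < h" "k < h"
  shows "\<bar>gram (Inl (p, j)) (Inl (q, k))\<bar> = 2"
proof -
  obtain \<beta>\<^sub>0 where \<beta>\<^sub>0: "\<beta>\<^sub>0 \<in> Bl" "p \<in> \<beta>\<^sub>0" "q \<in> \<beta>\<^sub>0"
    using pair_in_unique_block[OF pq] by blast
  have common: "{\<beta> \<in> Bl. p \<in> \<beta> \<and> q \<in> \<beta>} = {\<beta>\<^sub>0}"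
    using \<beta>\<^sub>0 block_unique[OF _ \<beta>\<^sub>0(1) pq(3)] by blast
  have "(\<Sum>\<beta>\<in>Bl. frame_vec (Inl (p, j)) (Inl \<beta>) * frame_vec (Inl (q, k)) (Inl \<beta>))
      = (\<Sum>\<beta>\<in>Bl. if p \<in> \<beta> \<and> q \<in> \<beta> then 2 * (A j (\<sigma> p \<beta>) * A k (\<sigma> q \<beta>)) else 0)"
    by (intro sum.cong) (simp_all add: sqrt_two_mult_sqrt_two)
  also have "\<dots> = (\<Sum>\<beta>\<in>{\<beta> \<in> Bl. p \<in> \<beta> \<and> q \<in> \<beta>}. 2 * (A j (\<sigma> p \<beta>) * A k (\<sigma> q \<beta>)))"
    using finite_blocks by (simp add: sum.inter_filter)
  also have "\<dots> = 2 * (A j (\<sigma> p \<beta>\<^sub>0) * A k (\<sigma> q \<beta>\<^sub>0))"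
    unfolding common by simp
  finally have blocks: "(\<Sum>\<beta>\<in>Bl. frame_vec (Inl (p, j)) (Inl \<beta>) * frame_vec (Inl (q, k)) (Inl \<beta>))
      = 2 * (A j (\<sigma> p \<beta>\<^sub>0) * A k (\<sigma> q \<beta>\<^sub>0))" .
  have points: "(\<Sum>r\<in>V. frame_vec (Inl (p, j)) (Inr (Some r)) * frame_vec (Inl (q, k)) (Inr (Some r))) = 0"
    using pq(3) by (intro sum.neutral) auto
  have "\<sigma> p \<beta>\<^sub>0 < h" "\<sigma> q \<beta>\<^sub>0 < h"
    using \<sigma>_mem \<beta>\<^sub>0 pq by auto
  then have "\<bar>A j (\<sigma> p \<beta>\<^sub>0)\<bar> = 1" "\<bar>A k (\<sigma> q \<beta>\<^sub>0)\<bar> = 1"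
    using hadamard_abs_entry[OF hadamard_A] jk by auto
  then show ?thesis
    unfolding gram_def sum_frame_coords blocks points by (simp add: abs_mult)
qed

lemma gram_point_row:
  assumes p: "p \<in> V" and x: "x < 2 * h"
  shows "\<bar>gram (Inl (p, j)) (Inr x)\<bar> = 2"
proof -
  have points: "(\<Sum>r\<in>V. frame_vec (Inl (p, j)) (Inr (Some r)) * frame_vec (Inr x) (Inr (Some r))) = 2 * B x (\<tau> p)"
  proof -
    have "(\<Sum>r\<in>V. frame_vec (Inl (p, j)) (Inr (Some r)) * frame_vec (Inr x) (Inr (Some r)))
        = (\<Sum>r\<in>V. if r = p then 2 * B x (\<tau> p) else 0)"
      by (intro sum.cong) auto
    then show ?thesis using finite_points p by simp
  qed
  have "\<tau> p < 2 * h" using \<tau>_less[OF p] by simp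
  then have "\<bar>B x (\<tau> p)\<bar> = 1" using hadamard_abs_entry[OF hadamard_B x] by simp
  then show ?thesis
    unfolding gram_def sum_frame_coords points by (simp add: abs_mult)
qed

lemma gram_rows:
  assumes xy: "x < 2 * h" "y < 2 * h"
  shows "gram (Inr x) (Inr y) = (if x = y then 2 * real h + 2 else 2)"
proof -
  have "(\<Sum>q\<in>V. frame_vec (Inr x) (Inr (Some q)) * frame_vec (Inr y) (Inr (Some q)))
      = (\<Sum>c<2 * h - 1. B x c * B y c)"
    using sum_points[of "\<lambda>c. B x c * B y c"] by simp
  also have "\<dots> = (if x = y then real (2 * h) else 0) - 1"
    by (rule B_rows_init[OF xy])
  finally show ?thesis
    unfolding gram_def sum_frame_coords by simp
qed

lemma frame_operator_sym: "frame_operator a b = frame_operator b a"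
  unfolding frame_operator_def by (simp add: mult.commute)

lemma frame_operator_blocks:
  assumes \<beta>\<gamma>: "\<beta> \<in> Bl" "\<gamma> \<in> Bl"
  shows "frame_operator (Inl \<beta>) (Inl \<gamma>) = (if \<beta> = \<gamma> then 6 * real h else 0)"
proof -
  have point: "(\<Sum>j<h. frame_vec (Inl (p, j)) (Inl \<beta>) * frame_vec (Inl (p, j)) (Inl \<gamma>))
      = (if p \<in> \<beta> \<and> \<beta> = \<gamma> then 2 * real h else 0)" if p: "p \<in> V" for p
  proof (cases "p \<in> \<beta> \<and> p \<in> \<gamma>")
    case True
    then have c: "\<sigma> p \<beta> < h" "\<sigma> p \<gamma> < h" using \<sigma>_mem p \<beta>\<gamma> by auto
    have "(\<Sum>j<h. frame_vec (Inl (p, j)) (Inl \<beta>) * frame_vec (Inl (p, j)) (Inl \<gamma>))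
        = 2 * (\<Sum>j<h. A j (\<sigma> p \<beta>) * A j (\<sigma> p \<gamma>))"
      using True by (simp add: sqrt_two_mult_sqrt_two sum_distrib_left)
    also have "\<dots> = 2 * (if \<sigma> p \<beta> = \<sigma> p \<gamma> then real h else 0)"
      using hadamard_columns[OF hadamard_A c] by simp
    also have "\<dots> = (if \<beta> = \<gamma> then 2 * real h else 0)"
      using \<sigma>_inj[OF p \<beta>\<gamma>] True by auto
    finally show ?thesis using True by simp
  next
    case False
    then show ?thesis by auto
  qed
  have "frame_operator (Inl \<beta>) (Inl \<gamma>) = (\<Sum>p\<in>V. if p \<in> \<beta> \<and> \<beta> = \<gamma> then 2 * real h else 0)"
    unfolding frame_operator_def sum_frame_index using sum.cong[OF refl point] by simp
  also have "\<dots> = (if \<beta> = \<gamma> then 6 * real h else 0)"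
  proof (cases "\<beta> = \<gamma>")
    case True
    have "(\<Sum>p\<in>V. if p \<in> \<beta> \<and> \<beta> = \<gamma> then 2 * real h else 0) = (\<Sum>p\<in>V. if p \<in> \<beta> then 2 * real h else 0)"
      using True by simp
    also have "\<dots> = (\<Sum>p\<in>{p \<in> V. p \<in> \<beta>}. 2 * real h)"
      using finite_points by (rule sum.inter_filter[symmetric])
    also have "{p \<in> V. p \<in> \<beta>} = \<beta>"
      using block_subset[OF \<beta>\<gamma>(1)] by blast
    finally show ?thesis
      using True card_block[OF \<beta>\<gamma>(1)] by simp
  qed simp
  finally show ?thesis .
qed

lemma frame_operator_block_point:
  assumes \<beta>: "\<beta> \<in> Bl" and q: "q \<in> V"
  shows "frame_operator (Inl \<beta>) (Inr (Some q)) = 0"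
proof -
  have "(\<Sum>j<h. frame_vec (Inl (p, j)) (Inl \<beta>) * frame_vec (Inl (p, j)) (Inr (Some q)))
      = (if p = q then 2 * (\<Sum>j<h. frame_vec (Inl (q, j)) (Inl \<beta>)) else 0)" for p
    by (cases "p = q") (simp_all add: sum_distrib_left mult.commute)
  then have "frame_operator (Inl \<beta>) (Inr (Some q)) = 2 * (\<Sum>j<h. frame_vec (Inl (q, j)) (Inl \<beta>))"
    unfolding frame_operator_def sum_frame_index using finite_points q by simp
  also have "\<dots> = 0"
  proof (cases "q \<in> \<beta>")
    case True
    have c: "\<sigma> q \<beta> < h" "\<sigma> q \<beta> \<noteq> 0" using \<sigma>_mem[OF q \<beta> True] by auto
    have "(\<Sum>j<h. frame_vec (Inl (q, j)) (Inl \<beta>)) = sqrt 2 * (\<Sum>j<h. A j (\<sigma> q \<beta>) * A j 0)"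
      using True A_first_column by (simp add: sum_distrib_left)
    also have "\<dots> = 0"
      using hadamard_columns[OF hadamard_A c(1) h_pos] c(2) by simp
    finally show ?thesis by simp
  qed simp
  finally show ?thesis .
qed

lemma frame_operator_block_extra: "frame_operator (Inl \<beta>) (Inr None) = 0"
  unfolding frame_operator_def sum_frame_index by simp

lemma frame_operator_points:
  assumes qr: "q \<in> V" "r \<in> V"
  shows "frame_operator (Inr (Some q)) (Inr (Some r)) = (if q = r then 6 * real h else 0)"
proof -
  have "(\<Sum>j<h. frame_vec (Inl (p, j)) (Inr (Some q)) * frame_vec (Inl (p, j)) (Inr (Some r)))
      = (if p = q then (if q = r then 4 * real h else 0) else 0)" for p
    by simp
  then have points: "(\<Sum>p\<in>V. \<Sum>j<h. frame_vec (Inl (p, j)) (Inr (Some q)) * frame_vec (Inl (p, j)) (Inr (Some r)))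
      = (if q = r then 4 * real h else 0)"
    using finite_points qr(1) by simp
  have "\<tau> q < 2 * h" "\<tau> r < 2 * h" using \<tau>_less qr by fastforce+
  from hadamard_columns[OF hadamard_B this]
  have rows: "(\<Sum>x<2 * h. frame_vec (Inr x) (Inr (Some q)) * frame_vec (Inr x) (Inr (Some r)))
      = (if q = r then 2 * real h else 0)"
    using \<tau>_inj[OF qr] by auto
  show ?thesis
    unfolding frame_operator_def sum_frame_index points rows by simp
qed

lemma frame_operator_point_extra:
  assumes q: "q \<in> V"
  shows "frame_operator (Inr (Some q)) (Inr None) = 0"
proof -
  have t: "\<tau> q < 2 * h" "\<tau> q \<noteq> 2 * h - 1" using \<tau>_less[OF q] by simp_all
  have "(\<Sum>x<2 * h. frame_vec (Inr x) (Inr (Some q)) * frame_vec (Inr x) (Inr None))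
      = sqrt 3 * (\<Sum>x<2 * h. B x (\<tau> q) * B x (2 * h - 1))"
    using B_last_column by (simp add: sum_distrib_left mult.commute)
  also have "\<dots> = 0"
    using hadamard_columns[OF hadamard_B t(1)] t(2) h_pos by simp
  finally show ?thesis
    unfolding frame_operator_def sum_frame_index by simp
qed

lemma frame_operator_extra: "frame_operator (Inr None) (Inr None) = 6 * real h"
  unfolding frame_operator_def sum_frame_index by simp

lemma frame_indexE:
  assumes "i \<in> frame_index"
  obtains (point) p j where "p \<in> V" "j < h" "i = Inl (p, j)"
  | (row) x where "x < 2 * h" "i = Inr x"
  using assms unfolding frame_index_def by blast

lemma frame_coordsE:
  assumes "c \<in> frame_coords"
  obtains (block) \<beta> where "\<beta> \<in> Bl" "c = Inl \<beta>"
  | (point) q where "q \<in> V" "c = Inr (Some q)"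
  | (extra) "c = Inr None"
  using assms unfolding frame_coords_def by blast

lemma abs_gram_distinct:
  assumes "u \<in> frame_index" "w \<in> frame_index" "u \<noteq> w"
  shows "\<bar>gram u w\<bar> = 2"
  using assms(1)
proof (cases rule: frame_indexE)
  case u: (point p j)
  from assms(2) show ?thesis
  proof (cases rule: frame_indexE)
    case (point q k)
    with u assms(3) show ?thesis
      using gram_same_point gram_distinct_points by (cases "p = q") auto
  next
    case (row y)
    with u show ?thesis using gram_point_row by simp
  qed
next
  case u: (row x)
  from assms(2) show ?thesis
  proof (cases rule: frame_indexE)
    case (point q k)
    with u show ?thesis using gram_point_row gram_sym by metis
  next
    case (row y)
    with u assms(3) show ?thesis using gram_rows by simp
  qed
qed

lemma frame_operator_eq:
  assumes "a \<in> frame_coords" "b \<in> frame_coords"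
  shows "frame_operator a b = (if a = b then 6 * real h else 0)"
  using assms(1)
proof (cases rule: frame_coordsE)
  case a: (block \<beta>)
  from assms(2) show ?thesis
    by (cases rule: frame_coordsE)
      (use a frame_operator_blocks frame_operator_block_point frame_operator_block_extra in auto)
next
  case a: (point q)
  from assms(2) show ?thesis
    by (cases rule: frame_coordsE)
      (use a frame_operator_block_point frame_operator_points frame_operator_point_extra
        frame_operator_sym in auto)
next
  case a: extra
  from assms(2) show ?thesis
    by (cases rule: frame_coordsE)
      (use a frame_operator_block_extra frame_operator_point_extra frame_operator_extra
        frame_operator_sym in auto)
qed

theorem ex_is_ETF_frame: "\<exists>\<phi>. is_ETF (card frame_coords) (card frame_index) \<phi>"
proof (rule is_ETF_of_finite_frame[OF finite_frame_index finite_frame_coords])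
  fix i assume "i \<in> frame_index"
  then show "\<exists>c\<in>frame_coords. frame_vec i c \<noteq> 0"
  proof (cases rule: frame_indexE)
    case (point p j)
    then show ?thesis by (intro bexI[of _ "Inr (Some p)"]) (auto simp: frame_coords_def)
  next
    case (row x)
    then show ?thesis by (intro bexI[of _ "Inr None"]) (auto simp: frame_coords_def)
  qed
next
  fix i assume "i \<in> frame_index"
  then show "(\<Sum>c\<in>frame_coords. frame_vec i c * frame_vec i c) = 2 * real h + 2"
    by (cases rule: frame_indexE) (simp_all add: gram_same_point gram_rows flip: gram_def)
next
  fix i j assume "i \<in> frame_index" "j \<in> frame_index" "i \<noteq> j"
  then show "\<bar>\<Sum>c\<in>frame_coords. frame_vec i c * frame_vec j c\<bar> = 2"
    using abs_gram_distinct unfolding gram_def by blast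
next
  fix a b assume "a \<in> frame_coords" "b \<in> frame_coords"
  then show "(\<Sum>i\<in>frame_index. frame_vec i a * frame_vec i b) = (if a = b then 6 * real h else 0)"
    using frame_operator_eq unfolding frame_operator_def by blast
qed

end

lemma ex_ETF_from_steiner_hadamard:
  assumes S: "steiner_triple_system V Bl" and card_V: "card V = 2 * h - 1"
    and H: "is_hadamard h H" and h: "0 < h"
  shows "\<exists>M N \<phi>. 3 * M = (h + 1) * (2 * h + 1) \<and> N = h * (2 * h + 1) \<and> is_ETF M N \<phi>"
proof -
  interpret steiner_triple_system V Bl by fact
  obtain A where A: "is_hadamard h A" "\<forall>j<h. A j 0 = 1"
    using hadamard_normalize_column[OF H h] by blast
  have "2 * h - 1 < 2 * h" using h by simp
  then obtain B where B: "is_hadamard (2 * h) B" "\<forall>x<2 * h. B x (2 * h - 1) = 1"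
    using hadamard_normalize_column[OF hadamard_sylvester_double[OF H]] by blast
  have "\<exists>f. bij_betw f {\<beta> \<in> Bl. p \<in> \<beta>} {1..<h}" if "p \<in> V" for p
  proof -
    have "card {\<beta> \<in> Bl. p \<in> \<beta>} = card {1..<h}"
      using card_blocks_through[OF that] card_V by simp
    then show ?thesis
      using finite_blocks by (intro finite_same_card_bij) auto
  qed
  then obtain \<sigma> where \<sigma>: "\<And>p. p \<in> V \<Longrightarrow> bij_betw (\<sigma> p) {\<beta> \<in> Bl. p \<in> \<beta>} {1..<h}"
    by metis
  obtain \<tau> where \<tau>: "bij_betw \<tau> V {..<2 * h - 1}"
    using ex_bij_betw_finite_nat[OF finite_points] card_V by (metis lessThan_atLeast0)
  interpret frame: steiner_hadamard_frame V Bl h A B \<sigma> \<tau>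
    by (intro steiner_hadamard_frame.intro steiner_hadamard_frame_axioms.intro S)
      (use A B \<sigma> \<tau> h card_V in auto)
  obtain \<phi> where "is_ETF (card frame.frame_coords) (card frame.frame_index) \<phi>"
    using frame.ex_is_ETF_frame by blast
  then show ?thesis
    using frame.card_frame_coords frame.card_frame_index
    by (intro exI[of _ "card frame.frame_coords"] exI[of _ "card frame.frame_index"]) blast
qed

lemma hadamard_order_steiner_admissible:
  assumes H: "is_hadamard h H" and h3: "h mod 3 = 1 \<or> h mod 3 = 2"
  shows "2 * h - 1 = 1 \<or> (2 * h - 1) mod 6 = 3 \<or> (2 * h - 1) mod 12 = 7"
proof (cases "3 \<le> h")
  case False
  with h3 have "h = 1 \<or> h = 2" by auto
  then show ?thesis by auto
next
  case True
  then obtain k where k: "h = 4 * k"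
    using hadamard_order_dvd_4[OF H] by blast
  have "h mod 3 = (k + 3 * k) mod 3" using k by simp
  also have "\<dots> = k mod 3" by (rule mod_mult_self2)
  finally have "k mod 3 = 1 \<or> k mod 3 = 2" using h3 by simp
  moreover obtain t where "k = 3 * t + k mod 3"
    using div_mult_mod_eq[of k 3] by (metis add.commute mult.commute)
  ultimately consider "k = 3 * t + 1" | "k = 3 * t + 2" by metis
  then show ?thesis
  proof cases
    case 1
    then have "2 * h - 1 = 7 + 12 * (2 * t)" using k by simp
    then show ?thesis by (simp only: mod_mult_self2) simp
  next
    case 2
    then have "2 * h - 1 = 3 + 6 * (4 * t + 2)" using k by simp
    then show ?thesis by (simp only: mod_mult_self2) simp
  qed
qed

theorem corollary3p3:
  fixes h :: nat and H :: "nat \<Rightarrow> nat \<Rightarrow> real"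
  assumes "is_hadamard h H"
    and "h mod 3 = 1 \<or> h mod 3 = 2"
  shows "\<exists>M N phi. 3 * M = (h + 1) * (2 * h + 1) \<and> N = h * (2 * h + 1) \<and> is_ETF M N phi"
proof -
  have h: "0 < h" using assms(2) by auto
  obtain V :: "nat set" and Bl where "steiner_triple_system V Bl" "card V = 2 * h - 1"
    using steiner_triple_system_exists[OF hadamard_order_steiner_admissible[OF assms]] by blast
  from ex_ETF_from_steiner_hadamard[OF this assms(1) h] show ?thesis .
qed

end
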